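(* Let $(f,g)$ be a Ribaucour pair of $(\mathfrak{m}^1,\mathfrak{m}^2)$-type, let $\lambda\in\mathbb{R}$, and let $\sigma_n$ be the inversion with respect to $\mathfrak{n}:=\mathfrak{m}^1+\lambda\mathfrak{m}^2+\langle\mathfrak{m}^1+\lambda\mathfrak{m}^2,\mathfrak{p}\rangle\mathfrak{p}$. Then $(f,\sigma_n(g))$ is also a Ribaucour pair, and it has the same (R-)evolution map as $(f,g)$.
   Context: Light cone model: $\mathbb{R}^{4,2}$ with form of signature $(4,2)$, light cone $\mathcal{L}$, $\mathbb{P}(\mathcal{L})$; fixed $\mathfrak{p}$ with $\langle\mathfrak{p},\mathfrak{p}\rangle=-1$; $v$ with $\langle\mathfrak{v},\mathfrak{p}\rangle=0$ are points of $\mathbb{R}^3\cup\{\infty\}$, others oriented spheres; incidence = orthogonality. Inversion in $\mathfrak{a}$ ($\langle\mathfrak{a},\mathfrak{a}\rangle\ne0$): $\sigma_a(x)=x-\frac{2\langle x,\mathfrak{a}\rangle}{\langle\mathfrak{a},\mathfrak{a}\rangle}\mathfrak{a}$; M-inversion if $\mathfrak{a}\perp\mathfrak{p}$. Discrete curves are maps from consecutive integers to points. Ribaucour pair $(f,g)$: $f_i,f_j,g_j,g_i$ concircular for each edge; with representatives satisfying $\mathfrak{f}_i-\mathfrak{f}_j+\mathfrak{g}_j-\mathfrak{g}_i=0$, the R-evolution map consists of the M-inversions in $\mathfrak{r}_{ij}=\mathfrak{f}_i-\mathfrak{f}_j=\mathfrak{g}_i-\mathfrak{g}_j$ (mapping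 $f_i\mapsto f_j$, $g_i\mapsto g_j$). The pair is of $(\mathfrak{m}^1,\mathfrak{m}^2)$-type if $\mathrm{span}\{\mathfrak{m}^1,\mathfrak{m}^2,\mathfrak{p}\}$ is 3-dimensional and consists of fixed points of all inversions of the R-evolution map. *)

theory Defs
  imports "HOL-Analysis.Analysis"
begin

text \<open>The space R^{4,2}: vectors (x, y) with x in R^4, y in R^2 and the
symmetric bilinear form of signature (4,2).\<close>

type_synonym vec42 = "(real^4) \<times> (real^2)"

definition lf :: "vec42 \<Rightarrow> vec42 \<Rightarrow> real" where
  "lf x y = fst x \<bullet> fst y - snd x \<bullet> snd y"

text \<open>Inversion in a vector a (meaningful when lf a a is nonzero).\<close>
definition inversion :: "vec42 \<Rightarrow> vec42 \<Rightarrow> vec42" where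
  "inversion a x = x - (2 * lf x a / lf a a) *\<^sub>R a"

text \<open>Homogeneous coordinates of a point of R^3 union infinity:
a nonzero lightlike vector orthogonal to p.\<close>
definition is_point :: "vec42 \<Rightarrow> vec42 \<Rightarrow> bool" where
  "is_point p v \<longleftrightarrow> v \<noteq> 0 \<and> lf v v = 0 \<and> lf v p = 0"

definition same_point :: "vec42 \<Rightarrow> vec42 \<Rightarrow> bool" where
  "same_point v w \<longleftrightarrow> (\<exists>c. c \<noteq> 0 \<and> w = c *\<^sub>R v)"

text \<open>Four points of the projective light cone are concircular iff their
representatives span a subspace of dimension at most 3 (a circle is the
intersection of the light cone with a 3-dimensional subspace).\<close>
definition concircular :: "vec42 \<Rightarrow> vec42 \<Rightarrow> vec42 \<Rightarrow> vec42 \<Rightarrow> bool" where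
  "concircular a b c d \<longleftrightarrow> dim (span {a, b, c, d}) \<le> 3"

definition int_interval :: "int set \<Rightarrow> bool" where
  "int_interval I \<longleftrightarrow> (\<forall>i j k. i \<in> I \<longrightarrow> k \<in> I \<longrightarrow> i \<le> j \<longrightarrow> j \<le> k \<longrightarrow> j \<in> I)"

definition ribaucour_pair :: "vec42 \<Rightarrow> int set \<Rightarrow> (int \<Rightarrow> vec42) \<Rightarrow> (int \<Rightarrow> vec42) \<Rightarrow> bool" where
  "ribaucour_pair p I F G \<longleftrightarrow>
     (\<forall>i\<in>I. is_point p (F i) \<and> is_point p (G i)) \<and>
     (\<forall>i. i \<in> I \<longrightarrow> i + 1 \<in> I \<longrightarrow> concircular (F i) (F (i+1)) (G (i+1)) (G i))"

definition ribaucour_normalised :: "int set \<Rightarrow> (int \<Rightarrow> vec42) \<Rightarrow> (int \<Rightarrow> vec42) \<Rightarrow> bool" where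
  "ribaucour_normalised I F G \<longleftrightarrow>
     (\<forall>i. i \<in> I \<longrightarrow> i + 1 \<in> I \<longrightarrow> F i - F (i+1) + G (i+1) - G i = 0)"

end

theory Submission
  imports Defs
begin

text \<open>The vector \<open>n\<close> lies in the span fixed by every inversion of the R-evolution map, so
it is orthogonal to every \<open>r\<^sub>i\<^sub>j = f\<^sub>i - f\<^sub>j\<close>. Moreover \<open>n\<close> is the projection of
\<open>m\<^sup>1 + \<lambda>m\<^sup>2\<close> orthogonal to \<open>p\<close>, so \<open>\<sigma>\<^sub>n\<close> is an M-inversion and maps points to points.
Being linear, \<open>\<sigma>\<^sub>n\<close> gives \<open>\<sigma>\<^sub>n(g\<^sub>i) - \<sigma>\<^sub>n(g\<^sub>j) = \<sigma>\<^sub>n(r\<^sub>i\<^sub>j) = r\<^sub>i\<^sub>j\<close>: the representatives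
\<open>f\<close>, \<open>\<sigma>\<^sub>n(g)\<close> are again normalised with the same edge vectors \<open>r\<^sub>i\<^sub>j\<close>, hence span
concircular quadruples and have the same evolution map.\<close>

lemma lf_sym: "lf x y = lf y x"
  unfolding lf_def by (simp add: inner_commute)

lemma lf_diff_left: "lf (x - y) z = lf x z - lf y z"
  unfolding lf_def by (simp add: inner_diff_left)

lemma lf_diff_right: "lf z (x - y) = lf z x - lf z y"
  by (metis lf_sym lf_diff_left)

lemma lf_add_left: "lf (x + y) z = lf x z + lf y z"
  unfolding lf_def by (simp add: inner_add_left)

lemma lf_scaleR_left: "lf (c *\<^sub>R x) z = c * lf x z"
  unfolding lf_def by (simp add: algebra_simps)

lemma lf_scaleR_right: "lf z (c *\<^sub>R x) = c * lf z x"
  by (metis lf_sym lf_scaleR_left)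

lemma lf_self_nonzero_imp_nonzero: "lf a a \<noteq> 0 \<Longrightarrow> a \<noteq> 0"
  unfolding lf_def by auto

lemma lf_orthogonal_projection:
  assumes "lf p p = -1"
  shows "lf (m + lf m p *\<^sub>R p) p = 0"
  using assms by (simp add: lf_add_left lf_scaleR_left)

lemma inversion_diff: "inversion a x - inversion a y = inversion a (x - y)"
  unfolding inversion_def by (simp add: lf_diff_left algebra_simps diff_divide_distrib)

lemma inversion_eq_self_iff:
  assumes "lf a a \<noteq> 0"
  shows "inversion a x = x \<longleftrightarrow> lf x a = 0"
  using assms lf_self_nonzero_imp_nonzero[OF assms] unfolding inversion_def by auto

lemma inversion_orthogonal: "lf x a = 0 \<Longrightarrow> inversion a x = x"
  unfolding inversion_def by simp

lemma inversion_isometry: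
  assumes "lf a a \<noteq> 0"
  shows "lf (inversion a x) (inversion a y) = lf x y"
  using assms unfolding inversion_def
  by (simp add: lf_diff_left lf_diff_right lf_scaleR_left lf_scaleR_right
      lf_sym[of a x] lf_sym[of a y] field_simps)

lemma inversion_involution:
  assumes "lf a a \<noteq> 0"
  shows "inversion a (inversion a x) = x"
proof -
  have "lf (inversion a x) a = - lf x a"
    using assms unfolding inversion_def by (simp add: lf_diff_left lf_scaleR_left)
  then show ?thesis
    unfolding inversion_def by (simp add: algebra_simps)
qed

lemma inversion_eq_zero_iff:
  assumes "lf a a \<noteq> 0"
  shows "inversion a x = 0 \<longleftrightarrow> x = 0"
proof -
  have "inversion a 0 = 0"
    by (rule inversion_orthogonal) (simp add: lf_def)
  then show ?thesis
    by (metis assms inversion_involution)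
qed

lemma is_point_inversion:
  assumes "lf a a \<noteq> 0" and "lf a p = 0" and "is_point p v"
  shows "is_point p (inversion a v)"
proof -
  have "lf (inversion a v) p = lf v p"
    using assms(2) unfolding inversion_def by (simp add: lf_diff_left lf_scaleR_left)
  then show ?thesis
    using assms by (simp add: is_point_def inversion_isometry inversion_eq_zero_iff)
qed

lemma same_point_refl: "same_point v v"
  unfolding same_point_def by (rule exI[of _ 1]) simp

lemma concircular_if_parallelogram:
  assumes "a - b + c - d = 0"
  shows "concircular a b c d"
proof -
  have "d = a - b + c"
    using assms by (simp add: algebra_simps)
  then have "d \<in> span {a, b, c}"
    by (simp add: span_add span_diff span_base)
  then have "span {a, b, c, d} = span {a, b, c}"
    using span_redundant[of d "{a, b, c}"] by (simp add: insert_commute)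
  then have "dim (span {a, b, c, d}) \<le> card {a, b, c}"
    using dim_le_card[of "span {a, b, c, d}" "{a, b, c}"] by simp
  also have "card {a, b, c} \<le> 3"
    by (simp add: card_insert_le_m1)
  finally show ?thesis
    unfolding concircular_def .
qed

lemma ribaucour_pair_if_normalised:
  assumes "\<And>i. i \<in> I \<Longrightarrow> is_point p (F i) \<and> is_point p (G i)"
    and "ribaucour_normalised I F G"
  shows "ribaucour_pair p I F G"
  using assms concircular_if_parallelogram
  unfolding ribaucour_pair_def ribaucour_normalised_def by blast

lemma ribaucour_normalised_inversion:
  assumes "ribaucour_normalised I F G"
    and "\<And>i. i \<in> I \<Longrightarrow> i + 1 \<in> I \<Longrightarrow> lf (F i - F (i+1)) n = 0"
  shows "ribaucour_normalised I F (\<lambda>i. inversion n (G i))"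
  unfolding ribaucour_normalised_def
proof (intro allI impI)
  fix i
  assume edge: "i \<in> I" "i + 1 \<in> I"
  have "G i - G (i+1) = F i - F (i+1)"
    using assms(1) edge unfolding ribaucour_normalised_def by (auto simp: algebra_simps)
  then have "inversion n (G i) - inversion n (G (i+1)) = inversion n (F i - F (i+1))"
    by (simp add: inversion_diff)
  also have "\<dots> = F i - F (i+1)"
    using assms(2)[OF edge] by (rule inversion_orthogonal)
  finally show "F i - F (i+1) + inversion n (G (i+1)) - inversion n (G i) = 0"
    by (simp add: algebra_simps)
qed

theorem proposition2p6:
  fixes p m1 m2 :: vec42 and lam :: real and I :: "int set"
    and F G :: "int \<Rightarrow> vec42"
  assumes p_norm: "lf p p = -1"
    and I_int: "int_interval I"
    and rib: "ribaucour_pair p I F G"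
    and norm: "ribaucour_normalised I F G"
    and nondeg: "\<And>i. i \<in> I \<Longrightarrow> i + 1 \<in> I \<Longrightarrow> lf (F i - F (i+1)) (F i - F (i+1)) \<noteq> 0"
    and type_dim: "dim (span {m1, m2, p}) = 3"
    and type_fix: "\<And>i x. i \<in> I \<Longrightarrow> i + 1 \<in> I \<Longrightarrow> x \<in> span {m1, m2, p} \<Longrightarrow>
                      inversion (F i - F (i+1)) x = x"
    and n_nonnull: "lf (m1 + lam *\<^sub>R m2 + lf (m1 + lam *\<^sub>R m2) p *\<^sub>R p)
                       (m1 + lam *\<^sub>R m2 + lf (m1 + lam *\<^sub>R m2) p *\<^sub>R p) \<noteq> 0"
  shows "let n = m1 + lam *\<^sub>R m2 + lf (m1 + lam *\<^sub>R m2) p *\<^sub>R p in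
         ribaucour_pair p I F (\<lambda>i. inversion n (G i)) \<and>
         (\<exists>F' G'. (\<forall>i\<in>I. same_point (F i) (F' i) \<and> same_point (inversion n (G i)) (G' i)) \<and>
                  ribaucour_normalised I F' G' \<and>
                  (\<forall>i. i \<in> I \<longrightarrow> i + 1 \<in> I \<longrightarrow>
                       inversion (F' i - F' (i+1)) = inversion (F i - F (i+1))))"
proof -
  define n where "n = m1 + lam *\<^sub>R m2 + lf (m1 + lam *\<^sub>R m2) p *\<^sub>R p"
  have n_in_span: "n \<in> span {m1, m2, p}"
    unfolding n_def by (intro span_add span_scale span_base) auto
  have n_orth_edges: "lf (F i - F (i+1)) n = 0" if "i \<in> I" "i + 1 \<in> I" for i
    using type_fix[OF that n_in_span] inversion_eq_self_iff[OF nondeg[OF that]]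
    by (simp add: lf_sym)
  have normalised: "ribaucour_normalised I F (\<lambda>i. inversion n (G i))"
    using norm n_orth_edges by (rule ribaucour_normalised_inversion)
  have "lf n n \<noteq> 0" and "lf n p = 0"
    using n_nonnull lf_orthogonal_projection[OF p_norm] by (simp_all add: n_def)
  then have "is_point p (F i) \<and> is_point p (inversion n (G i))" if "i \<in> I" for i
    using rib that is_point_inversion unfolding ribaucour_pair_def by blast
  then have "ribaucour_pair p I F (\<lambda>i. inversion n (G i))"
    using normalised by (rule ribaucour_pair_if_normalised)
  with normalised show ?thesis
    unfolding Let_def n_def[symmetric]
    by (intro conjI exI[of _ F] exI[of _ "\<lambda>i. inversion n (G i)"]) (auto intro: same_point_refl)
qed

end
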